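(* Let $\varphi(x)$ be a first-order formula of quantifier rank at most $q$ over a finite modal signature, and suppose $\varphi$ is invariant under graded bisimulation $\sim_{\mathrm{C}}$ on the class of all pointed Kripke structures (respectively, on the class of all finite pointed Kripke structures). Let $\ell=2^q-1$. Then for every pointed Kripke structure (respectively, every finite pointed Kripke structure) $\mathcal{M},w$ such that $\mathcal{M}\restriction N^\ell(w),w$ is rooted tree-like, we have $$\mathcal{M}\models\varphi[w]\iff \mathcal{M}\restriction N^\ell(w)\models\varphi[w].$$
   Context: A finite modal signature consists of a finite set $I$ of agents and a finite set $J$ of basic propositions. A Kripke structure is $\mathcal{M}=(W,(E_i)_{i\in I},(P_j)_{j\in J})$ with $W\neq\emptyset$, $E_i\subseteq W\times W$, $P_j\subseteq W$, viewed as a relational structure with binary relations $E_i$ and unary relations $P_j$; a pointed Kripke structure $\mathcal{M},w$ has a distinguished world $w$, and $\varphi(x)$ is evaluated by assigning $w$ to $x$. $E_i[u]=\{v:(u,v)\in E_i\}$. A graded bisimulation between $\mathcal{M}$ and $\mathcal{M}'=(W',(E'_i),(P'_j))$ is a non-empty relation $Z\subseteq W\times W'$ such that for all $(u,u')\in Z$: (atom equivalence) $u\in P_j\iff u'\in P'_j$ for all $j$; (graded forth) for every $i$ and $k\ge1$ and pairwise distinct $v_1,\dots,v_k\in E_i[u]$ there are pairwise distinct $v'_1,\dots,v'_k\in E'_i[u']$ with $(v_m,v'_m)\in Z$ for all $m$; (graded back) symmetrically. $\mathcal{M},w\sim_{\mathrm{C}}\mathcal{M}',w'$ if such $Z$ exists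 with $(w,w')\in Z$. The $\ell$-neighbourhood $N^\ell(w)$ of $w$ is the set of worlds at distance at most $\ell$ from $w$ in the undirected graph on $W$ whose edges are given by the union of the symmetrisations of all $E_i$; $\mathcal{M}\restriction N^\ell(w)$ is the induced substructure on $N^\ell(w)$. $\mathcal{M}\restriction N^\ell(w),w$ is rooted tree-like (equivalently, $\mathcal{M},w$ is rooted tree-like to depth $\ell$) if, within $N^\ell(w)$, the symmetrisations of the $E_i$ are pairwise disjoint, their union is acyclic (so it forms an undirected tree with root $w$), and every $E_i$-edge within $N^\ell(w)$ is directed away from the root $w$. *)

theory Defs
  imports Main
begin

record ('w, 'i, 'j) kripke =
  worlds :: "'w set"
  rel    :: "'i \<Rightarrow> ('w \<times> 'w) set"
  val    :: "'j \<Rightarrow> 'w set"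

definition wf_kripke :: "('w, 'i, 'j) kripke \<Rightarrow> bool" where
  "wf_kripke M \<longleftrightarrow> worlds M \<noteq> {}
     \<and> (\<forall>i. rel M i \<subseteq> worlds M \<times> worlds M)
     \<and> (\<forall>j. val M j \<subseteq> worlds M)"

definition graded_bisim ::
  "('w, 'i, 'j) kripke \<Rightarrow> ('v, 'i, 'j) kripke \<Rightarrow> ('w \<times> 'v) set \<Rightarrow> bool" where
  "graded_bisim M M' Z \<longleftrightarrow> Z \<noteq> {} \<and> Z \<subseteq> worlds M \<times> worlds M' \<and>
     (\<forall>(u, u') \<in> Z.
        (\<forall>j. u \<in> val M j \<longleftrightarrow> u' \<in> val M' j) \<and>
        (\<forall>i vs. vs \<noteq> [] \<and> distinct vs \<and> set vs \<subseteq> rel M i `` {u} \<longrightarrow>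
           (\<exists>vs'. distinct vs' \<and> set vs' \<subseteq> rel M' i `` {u'} \<and>
                  list_all2 (\<lambda>a b. (a, b) \<in> Z) vs vs')) \<and>
        (\<forall>i vs'. vs' \<noteq> [] \<and> distinct vs' \<and> set vs' \<subseteq> rel M' i `` {u'} \<longrightarrow>
           (\<exists>vs. distinct vs \<and> set vs \<subseteq> rel M i `` {u} \<and>
                  list_all2 (\<lambda>a b. (a, b) \<in> Z) vs vs')))"

definition gbisimilar ::
  "('w, 'i, 'j) kripke \<Rightarrow> 'w \<Rightarrow> ('v, 'i, 'j) kripke \<Rightarrow> 'v \<Rightarrow> bool" where
  "gbisimilar M w M' w' \<longleftrightarrow> (\<exists>Z. graded_bisim M M' Z \<and> (w, w') \<in> Z)"

datatype ('i, 'j) fo =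
    FEq nat nat
  | FRel 'i nat nat
  | FPred 'j nat
  | FNeg "('i, 'j) fo"
  | FConj "('i, 'j) fo" "('i, 'j) fo"
  | FDisj "('i, 'j) fo" "('i, 'j) fo"
  | FEx nat "('i, 'j) fo"
  | FAll nat "('i, 'j) fo"

fun fv :: "('i, 'j) fo \<Rightarrow> nat set" where
  "fv (FEq x y) = {x, y}"
| "fv (FRel i x y) = {x, y}"
| "fv (FPred j x) = {x}"
| "fv (FNeg f) = fv f"
| "fv (FConj f g) = fv f \<union> fv g"
| "fv (FDisj f g) = fv f \<union> fv g"
| "fv (FEx x f) = fv f - {x}"
| "fv (FAll x f) = fv f - {x}"

fun qr :: "('i, 'j) fo \<Rightarrow> nat" where
  "qr (FEq x y) = 0"
| "qr (FRel i x y) = 0"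
| "qr (FPred j x) = 0"
| "qr (FNeg f) = qr f"
| "qr (FConj f g) = max (qr f) (qr g)"
| "qr (FDisj f g) = max (qr f) (qr g)"
| "qr (FEx x f) = Suc (qr f)"
| "qr (FAll x f) = Suc (qr f)"

fun sat :: "('w, 'i, 'j) kripke \<Rightarrow> (nat \<Rightarrow> 'w) \<Rightarrow> ('i, 'j) fo \<Rightarrow> bool" where
  "sat M v (FEq x y) \<longleftrightarrow> v x = v y"
| "sat M v (FRel i x y) \<longleftrightarrow> (v x, v y) \<in> rel M i"
| "sat M v (FPred j x) \<longleftrightarrow> v x \<in> val M j"
| "sat M v (FNeg f) \<longleftrightarrow> \<not> sat M v f"
| "sat M v (FConj f g) \<longleftrightarrow> sat M v f \<and> sat M v g"
| "sat M v (FDisj f g) \<longleftrightarrow> sat M v f \<or> sat M v g"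
| "sat M v (FEx x f) \<longleftrightarrow> (\<exists>a \<in> worlds M. sat M (v(x := a)) f)"
| "sat M v (FAll x f) \<longleftrightarrow> (\<forall>a \<in> worlds M. sat M (v(x := a)) f)"

text \<open>M |= phi[w] for a formula phi(x) whose only free variable is x:
  the world w is assigned to x (and, harmlessly, to every other variable).\<close>
definition holds_at :: "('w, 'i, 'j) kripke \<Rightarrow> 'w \<Rightarrow> ('i, 'j) fo \<Rightarrow> bool" where
  "holds_at M w f \<longleftrightarrow> sat M (\<lambda>_. w) f"

definition gbisim_invariant ::
  "(('u, 'i, 'j) kripke \<Rightarrow> bool) \<Rightarrow> ('i, 'j) fo \<Rightarrow> bool" where
  "gbisim_invariant C f \<longleftrightarrow>
     (\<forall>M w M' w'. wf_kripke M \<and> wf_kripke M' \<and> C M \<and> C M' \<and>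
        w \<in> worlds M \<and> w' \<in> worlds M' \<and> gbisimilar M w M' w' \<longrightarrow>
        (holds_at M w f \<longleftrightarrow> holds_at M' w' f))"

definition ugraph :: "('w, 'i, 'j) kripke \<Rightarrow> ('w \<times> 'w) set" where
  "ugraph M = (\<Union>i. rel M i \<union> (rel M i)\<inverse>)"

definition nbhd :: "('w, 'i, 'j) kripke \<Rightarrow> nat \<Rightarrow> 'w \<Rightarrow> 'w set" where
  "nbhd M l w = {u. \<exists>n \<le> l. (w, u) \<in> ugraph M ^^ n}"

definition restrict :: "('w, 'i, 'j) kripke \<Rightarrow> 'w set \<Rightarrow> ('w, 'i, 'j) kripke" where
  "restrict M S = \<lparr> worlds = worlds M \<inter> S,
                    rel = (\<lambda>i. rel M i \<inter> (S \<times> S)),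
                    val = (\<lambda>j. val M j \<inter> S) \<rparr>"

definition udist :: "('w, 'i, 'j) kripke \<Rightarrow> 'w \<Rightarrow> 'w \<Rightarrow> nat" where
  "udist M w u = (LEAST n. (w, u) \<in> ugraph M ^^ n)"

definition ucycle :: "('w \<times> 'w) set \<Rightarrow> 'w list \<Rightarrow> bool" where
  "ucycle G cs \<longleftrightarrow> length cs \<ge> 3 \<and> distinct cs \<and>
     (\<forall>k < length cs. (cs ! k, cs ! ((k + 1) mod length cs)) \<in> G)"

definition uacyclic :: "('w \<times> 'w) set \<Rightarrow> bool" where
  "uacyclic G \<longleftrightarrow> (\<forall>u. (u, u) \<notin> G) \<and> \<not> (\<exists>cs. ucycle G cs)"

definition rooted_tree_like :: "('w, 'i, 'j) kripke \<Rightarrow> 'w \<Rightarrow> bool" where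
  "rooted_tree_like M w \<longleftrightarrow>
     (\<forall>i i'. i \<noteq> i' \<longrightarrow> (rel M i \<union> (rel M i)\<inverse>) \<inter> (rel M i' \<union> (rel M i')\<inverse>) = {}) \<and>
     uacyclic (ugraph M) \<and>
     (\<forall>u \<in> worlds M. (w, u) \<in> (ugraph M)\<^sup>*) \<and>
     (\<forall>i u v. (u, v) \<in> rel M i \<longrightarrow> udist M w v = Suc (udist M w u))"

end

theory Submission
  imports Defs
begin

text \<open>Let N be the restriction of M to the (2^q - 1)-neighbourhood of w. Form the disjoint
  union A of M with q + 1 copies of M and q + 1 copies of N, and the union B of N with the same
  copies. Since M, w and N, w are generated substructures of A and B, invariance under graded
  bisimulation reduces the claim to A, (0, w) and B, (0, w) agreeing on formulas of quantifier
  rank q. Duplicator wins the q-round Ehrenfeucht-Fraisse game on A and B: with k rounds left,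
  matched pebbles lie on the same world of M and the (2^k - 1)-balls around them coincide. A
  pebble placed within distance 2^(k-1) of an old pebble is answered by the same world in the
  copy of the old partner; a pebble far from all old ones is answered by the same world in an
  unused isomorphic copy.\<close>

lemma relpow_mono: "(R :: 'a rel) \<subseteq> S \<Longrightarrow> R ^^ n \<subseteq> S ^^ n"
  by (induction n) (simp_all add: relcomp_mono)

lemma relpow_sym: "sym R \<Longrightarrow> (x, y) \<in> R ^^ n \<Longrightarrow> (y, x) \<in> R ^^ n"
proof (induction n arbitrary: y)
  case (Suc n)
  then obtain x' where "(x, x') \<in> R ^^ n" "(x', y) \<in> R" by auto
  with Suc show ?case by (metis relpow_Suc_I2 symD)
qed simp

lemma relpow_restrict_transfer:
  assumes "(u, v) \<in> (G \<inter> D \<times> D) ^^ n"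
    and "\<And>j x. j < n \<Longrightarrow> (u, x) \<in> (G \<inter> D \<times> D) ^^ j \<Longrightarrow> x \<in> D'" and "v \<in> D'"
  shows "(u, v) \<in> (G \<inter> D' \<times> D') ^^ n"
  using assms
proof (induction n arbitrary: v)
  case (Suc n)
  then obtain x where x: "(u, x) \<in> (G \<inter> D \<times> D) ^^ n" "(x, v) \<in> G" by auto
  with Suc.prems(2) have "x \<in> D'" by blast
  with Suc x have "(u, x) \<in> (G \<inter> D' \<times> D') ^^ n" by (meson less_SucI)
  with x(2) \<open>x \<in> D'\<close> Suc.prems(3) show ?case by (auto intro: relpow_Suc_I)
qed simp

lemma ugraph_restrict: "ugraph (restrict M S) = ugraph M \<inter> S \<times> S"
  unfolding ugraph_def restrict_def by auto

lemma sym_ugraph: "sym (ugraph M)"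
  unfolding ugraph_def sym_def by auto

lemma center_in_nbhd [simp]: "u \<in> nbhd N r u"
  unfolding nbhd_def by (auto intro: exI[of _ 0])

lemma nbhd_zero [simp]: "nbhd N 0 u = {u}"
  unfolding nbhd_def by auto

lemma nbhd_sym: "v \<in> nbhd N r u \<longleftrightarrow> u \<in> nbhd N r v"
proof -
  have "u \<in> nbhd N r v" if "v \<in> nbhd N r u" for u v
    using that relpow_sym[OF sym_ugraph, of u v] unfolding nbhd_def by auto
  then show ?thesis by blast
qed

lemma nbhd_trans: "v \<in> nbhd N r u \<Longrightarrow> x \<in> nbhd N s v \<Longrightarrow> x \<in> nbhd N (r + s) u"
proof -
  assume "v \<in> nbhd N r u" "x \<in> nbhd N s v"
  then obtain i j where "i \<le> r" "(u, v) \<in> ugraph N ^^ i" "j \<le> s" "(v, x) \<in> ugraph N ^^ j"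
    unfolding nbhd_def by blast
  then show ?thesis
    unfolding nbhd_def by (intro CollectI exI[of _ "i + j"]) (simp add: relpow_trans add_mono)
qed

lemma nbhd_mono: "r \<le> s \<Longrightarrow> nbhd N r u \<subseteq> nbhd N s u"
  unfolding nbhd_def using le_trans by blast

lemma nbhd_restrict_subset:
  assumes "u \<in> S" shows "nbhd (restrict M S) r u \<subseteq> S"
proof
  fix v assume "v \<in> nbhd (restrict M S) r u"
  then obtain n where "(u, v) \<in> (ugraph M \<inter> S \<times> S) ^^ n"
    unfolding nbhd_def ugraph_restrict by blast
  with assms show "v \<in> S" by (cases n) auto
qed

lemma nbhd_restrict_le: "nbhd (restrict M S) r u \<subseteq> nbhd M r u"
  unfolding nbhd_def ugraph_restrict using relpow_mono[of "ugraph M \<inter> S \<times> S" "ugraph M"] by blast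

lemma nbhd_restrict_transfer:
  assumes "nbhd (restrict M D) r u \<subseteq> D'" and "v \<in> nbhd (restrict M D) s u"
    and "s \<le> Suc r" and "v \<in> D'"
  shows "v \<in> nbhd (restrict M D') s u"
proof -
  obtain n where n: "n \<le> s" "(u, v) \<in> (ugraph M \<inter> D \<times> D) ^^ n"
    using assms(2) unfolding nbhd_def ugraph_restrict by blast
  have "x \<in> D'" if "j < n" "(u, x) \<in> (ugraph M \<inter> D \<times> D) ^^ j" for j x
  proof -
    have "j \<le> r" using that(1) n(1) assms(3) by linarith
    then have "x \<in> nbhd (restrict M D) r u"
      using that(2) unfolding nbhd_def ugraph_restrict by blast
    then show ?thesis using assms(1) by blast
  qed
  then have "(u, v) \<in> (ugraph M \<inter> D' \<times> D') ^^ n"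
    using relpow_restrict_transfer[OF n(2)] assms(4) by blast
  then show ?thesis
    using n(1) unfolding nbhd_def ugraph_restrict by blast
qed

section \<open>Disjoint unions of copies\<close>

definition copies :: "('w, 'i, 'j) kripke \<Rightarrow> (nat \<Rightarrow> 'w set) \<Rightarrow> nat \<Rightarrow> (nat \<times> 'w, 'i, 'j) kripke" where
  "copies M D K = \<lparr> worlds = {(c, u). c < K \<and> u \<in> D c},
     rel = (\<lambda>i. {((c, u), (c', v)). c' = c \<and> c < K \<and> u \<in> D c \<and> v \<in> D c \<and> (u, v) \<in> rel M i}),
     val = (\<lambda>j. {(c, u). c < K \<and> u \<in> D c \<and> u \<in> val M j}) \<rparr>"

lemma worlds_copies: "a \<in> worlds (copies M D K) \<longleftrightarrow> fst a < K \<and> snd a \<in> D (fst a)"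
  unfolding copies_def by (cases a) auto

lemma rel_copies: "(a, a') \<in> rel (copies M D K) i \<longleftrightarrow>
   fst a' = fst a \<and> fst a < K \<and> snd a \<in> D (fst a) \<and> snd a' \<in> D (fst a) \<and> (snd a, snd a') \<in> rel M i"
  unfolding copies_def by (cases a; cases a') auto

lemma val_copies: "a \<in> val (copies M D K) j \<longleftrightarrow> fst a < K \<and> snd a \<in> D (fst a) \<and> snd a \<in> val M j"
  unfolding copies_def by (cases a) auto

definition copy_near :: "('w, 'i, 'j) kripke \<Rightarrow> (nat \<Rightarrow> 'w set) \<Rightarrow> nat \<Rightarrow> nat \<times> 'w \<Rightarrow> nat \<times> 'w \<Rightarrow> bool" where
  "copy_near M D m a a' \<longleftrightarrow> fst a' = fst a \<and> snd a' \<in> nbhd (restrict M (D (fst a))) m (snd a)"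

lemma copy_near_zero: "copy_near M D 0 a a' \<longleftrightarrow> a' = a"
  unfolding copy_near_def by (auto simp: prod_eq_iff)

lemma copy_near_refl: "copy_near M D m a a"
  unfolding copy_near_def by simp

lemma copy_near_sym: "copy_near M D m a a' \<longleftrightarrow> copy_near M D m a' a"
  unfolding copy_near_def using nbhd_sym by (metis (no_types))

lemma copy_near_mono:
  assumes "copy_near M D m a a'" and "m \<le> m'" shows "copy_near M D m' a a'"
  using assms unfolding copy_near_def by (meson nbhd_mono subsetD)

lemma copy_near_if_rel: "(a, a') \<in> rel (copies M D K) i \<Longrightarrow> copy_near M D 1 a a'"
  unfolding rel_copies copy_near_def nbhd_def ugraph_restrict
  by (auto intro!: exI[of _ 1] simp: ugraph_def)

definition matched :: "('w, 'i, 'j) kripke \<Rightarrow> (nat \<Rightarrow> 'w set) \<Rightarrow> (nat \<Rightarrow> 'w set) \<Rightarrow> nat \<Rightarrow> nat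
   \<Rightarrow> nat \<times> 'w \<Rightarrow> nat \<times> 'w \<Rightarrow> bool" where
  "matched M DA DB K r a b \<longleftrightarrow> a \<in> worlds (copies M DA K) \<and> b \<in> worlds (copies M DB K) \<and>
     snd b = snd a \<and>
     nbhd (restrict M (DA (fst a))) r (snd a) \<subseteq> DB (fst b) \<and>
     nbhd (restrict M (DB (fst b))) r (snd b) \<subseteq> DA (fst a)"

lemma matched_swap: "matched M DA DB K r a b \<Longrightarrow> matched M DB DA K r b a"
  unfolding matched_def by (elim conjE) (intro conjI; simp)

lemma matched_mono:
  assumes "matched M DA DB K r a b" and "s \<le> r" shows "matched M DA DB K s a b"
  using assms(1) nbhd_mono[OF assms(2), of "restrict M (DA (fst a))" "snd a"]
    nbhd_mono[OF assms(2), of "restrict M (DB (fst b))" "snd b"]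
  unfolding matched_def by (meson order_trans)

lemma rel_copies_matched:
  assumes "matched M DA DB K r a b" and "matched M DA DB K r' a' b'"
    and "copy_near M DA 1 a a' \<longleftrightarrow> copy_near M DB 1 b b'"
  shows "(a, a') \<in> rel (copies M DA K) i \<longleftrightarrow> (b, b') \<in> rel (copies M DB K) i"
proof
  assume "(a, a') \<in> rel (copies M DA K) i"
  moreover from copy_near_if_rel[OF this] have "copy_near M DB 1 b b'" using assms(3) by simp
  ultimately show "(b, b') \<in> rel (copies M DB K) i"
    using assms(1,2) unfolding matched_def copy_near_def rel_copies worlds_copies by auto
next
  assume "(b, b') \<in> rel (copies M DB K) i"
  moreover from copy_near_if_rel[OF this] have "copy_near M DA 1 a a'" using assms(3) by simp
  ultimately show "(a, a') \<in> rel (copies M DA K) i"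
    using assms(1,2) unfolding matched_def copy_near_def rel_copies worlds_copies by auto
qed

definition same_nearness :: "('w, 'i, 'j) kripke \<Rightarrow> (nat \<Rightarrow> 'w set) \<Rightarrow> (nat \<Rightarrow> 'w set) \<Rightarrow> nat
   \<Rightarrow> nat \<times> 'w \<Rightarrow> nat \<times> 'w \<Rightarrow> nat \<times> 'w \<Rightarrow> nat \<times> 'w \<Rightarrow> bool" where
  "same_nearness M DA DB r a b a' b' \<longleftrightarrow> (\<forall>m \<le> r. copy_near M DA m a a' \<longleftrightarrow> copy_near M DB m b b')"

lemma same_nearness_swap: "same_nearness M DA DB r a b a' b' \<Longrightarrow> same_nearness M DB DA r b a b' a'"
  unfolding same_nearness_def by blast

lemma same_nearness_sym: "same_nearness M DA DB r a b a' b' \<Longrightarrow> same_nearness M DA DB r a' b' a b"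
  unfolding same_nearness_def by (simp add: copy_near_sym)

lemma same_nearness_refl: "same_nearness M DA DB r a b a b"
  unfolding same_nearness_def by (simp add: copy_near_refl)

lemma same_nearness_mono:
  "same_nearness M DA DB r a b a' b' \<Longrightarrow> s \<le> r \<Longrightarrow> same_nearness M DA DB s a b a' b'"
  unfolding same_nearness_def by simp

section \<open>The Ehrenfeucht-Fraisse game on copies\<close>

lemma copy_near_matched:
  assumes ab: "matched M DA DB K (2 * P - 1) a0 b0" and near: "copy_near M DA P a0 a" and "1 \<le> P"
  shows "copy_near M DB P b0 (fst b0, snd a)"
proof -
  have ball: "nbhd (restrict M (DA (fst a0))) (2 * P - 1) (snd a0) \<subseteq> DB (fst b0)"
    using ab unfolding matched_def by blast
  have u: "snd a \<in> nbhd (restrict M (DA (fst a0))) P (snd a0)"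
    using near unfolding copy_near_def by simp
  moreover have "P \<le> 2 * P - 1" using \<open>1 \<le> P\<close> by simp
  ultimately have "snd a \<in> DB (fst b0)" using ball nbhd_mono by (meson subsetD)
  then have "snd a \<in> nbhd (restrict M (DB (fst b0))) P (snd a0)"
    using nbhd_restrict_transfer[OF ball u] by simp
  then show ?thesis using ab unfolding copy_near_def matched_def by simp
qed

lemma nbhd_near_subset:
  assumes "nbhd (restrict M D) (2 * P - 1) u0 \<subseteq> D'" and "u \<in> nbhd (restrict M D) P u0"
    and "m \<le> P" and "1 \<le> P"
  shows "nbhd (restrict M D) (m - 1) u \<subseteq> D'"
proof -
  have "nbhd (restrict M D) (m - 1) u \<subseteq> nbhd (restrict M D) (P + (m - 1)) u0"
    using nbhd_trans[OF assms(2)] by blast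
  also have "\<dots> \<subseteq> nbhd (restrict M D) (2 * P - 1) u0"
    using assms(3,4) by (intro nbhd_mono) simp
  finally show ?thesis using assms(1) by simp
qed

lemma matched_near:
  assumes ab: "matched M DA DB K (2 * P - 1) a0 b0" and near: "copy_near M DA P a0 a" and "1 \<le> P"
  shows "matched M DA DB K (P - 1) a (fst b0, snd a)"
proof -
  have near': "copy_near M DB P b0 (fst b0, snd a)"
    using copy_near_matched[OF assms] .
  have u: "snd a \<in> nbhd (restrict M (DA (fst a0))) P (snd a0)" and fa: "fst a = fst a0"
    using near unfolding copy_near_def by simp_all
  have u': "snd a \<in> nbhd (restrict M (DB (fst b0))) P (snd b0)"
    using near' unfolding copy_near_def by simp
  have "nbhd (restrict M (DA (fst a0))) (2 * P - 1) (snd a0) \<subseteq> DB (fst b0)"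
    "nbhd (restrict M (DB (fst b0))) (2 * P - 1) (snd b0) \<subseteq> DA (fst a0)"
    using ab unfolding matched_def by blast+
  then have balls: "nbhd (restrict M (DA (fst a0))) (P - 1) (snd a) \<subseteq> DB (fst b0)"
      "nbhd (restrict M (DB (fst b0))) (P - 1) (snd a) \<subseteq> DA (fst a0)"
    using nbhd_near_subset[OF _ u] nbhd_near_subset[OF _ u'] \<open>1 \<le> P\<close> by simp_all
  have "snd a0 \<in> DA (fst a0)" "snd b0 \<in> DB (fst b0)" "fst a0 < K" "fst b0 < K"
    using ab unfolding matched_def worlds_copies by auto
  then have "snd a \<in> DA (fst a0)" "snd a \<in> DB (fst b0)"
    using u u' nbhd_restrict_subset by (meson subsetD)+
  then show ?thesis
    using balls fa \<open>fst a0 < K\<close> \<open>fst b0 < K\<close> unfolding matched_def worlds_copies by simp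
qed

lemma copy_near_transfer:
  assumes ab: "matched M DA DB K (2 * P - 1) a0 b0" and near: "copy_near M DA P a0 a" and "1 \<le> P"
    and same: "same_nearness M DA DB (2 * P) a0 b0 a' b'" and ab': "matched M DA DB K s a' b'"
    and "m \<le> P" and aa': "copy_near M DA m a a'"
  shows "copy_near M DB m (fst b0, snd a) b'"
proof -
  let ?NA = "nbhd (restrict M (DA (fst a0)))"
  have u: "snd a \<in> ?NA P (snd a0)" and fa: "fst a = fst a0"
    using near unfolding copy_near_def by simp_all
  have u': "snd a' \<in> ?NA m (snd a)" and fa': "fst a' = fst a0"
    using aa' fa unfolding copy_near_def by simp_all
  have "snd a' \<in> ?NA (P + m) (snd a0)"
    using nbhd_trans[OF u u'] .
  moreover have "P + m \<le> 2 * P" using \<open>m \<le> P\<close> by simp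
  ultimately have "snd a' \<in> ?NA (2 * P) (snd a0)"
    using nbhd_mono[of "P + m" "2 * P" "restrict M (DA (fst a0))"] by blast
  then have "copy_near M DA (2 * P) a0 a'"
    using fa' unfolding copy_near_def by simp
  then have "copy_near M DB (2 * P) b0 b'"
    using same unfolding same_nearness_def by simp
  then have fb': "fst b' = fst b0" unfolding copy_near_def by simp
  have "snd a' \<in> DB (fst b0)"
    using ab' fb' unfolding matched_def worlds_copies by auto
  moreover have "?NA (m - 1) (snd a) \<subseteq> DB (fst b0)"
    using nbhd_near_subset[OF _ u \<open>m \<le> P\<close> \<open>1 \<le> P\<close>] ab unfolding matched_def by blast
  ultimately have "snd a' \<in> nbhd (restrict M (DB (fst b0))) m (snd a)"
    using nbhd_restrict_transfer[OF _ u'] by simp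
  then show ?thesis
    using ab' fb' unfolding copy_near_def matched_def by simp
qed

lemma same_nearness_near:
  assumes ab: "matched M DA DB K (2 * P - 1) a0 b0" and near: "copy_near M DA P a0 a" and "1 \<le> P"
    and same: "same_nearness M DA DB (2 * P) a0 b0 a' b'" and ab': "matched M DA DB K s a' b'"
  shows "same_nearness M DA DB P a (fst b0, snd a) a' b'"
  unfolding same_nearness_def
proof (intro allI impI iffI)
  fix m assume "m \<le> P"
  show "copy_near M DA m a a' \<Longrightarrow> copy_near M DB m (fst b0, snd a) b'"
    using copy_near_transfer[OF assms \<open>m \<le> P\<close>] .
  assume "copy_near M DB m (fst b0, snd a) b'"
  then have "copy_near M DA m (fst a0, snd a) a'"
    using copy_near_transfer[OF matched_swap[OF ab] copy_near_matched[OF assms(1-3)] \<open>1 \<le> P\<close>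
        same_nearness_swap[OF same] matched_swap[OF ab'] \<open>m \<le> P\<close>] by simp
  moreover have "(fst a0, snd a) = a" using near unfolding copy_near_def by (simp add: prod_eq_iff)
  ultimately show "copy_near M DA m a a'" by simp
qed

text \<open>A position of the q-round Ehrenfeucht-Fraisse game with k rounds left, the pebbles being
  indexed by the variables in V. Bounding the occupied copies by q + 1 - k leaves a spare copy for
  every remaining round.\<close>
definition ef_position :: "('w, 'i, 'j) kripke \<Rightarrow> (nat \<Rightarrow> 'w set) \<Rightarrow> (nat \<Rightarrow> 'w set) \<Rightarrow> nat \<Rightarrow> nat
   \<Rightarrow> nat \<Rightarrow> nat set \<Rightarrow> (nat \<Rightarrow> nat \<times> 'w) \<Rightarrow> (nat \<Rightarrow> nat \<times> 'w) \<Rightarrow> bool" where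
  "ef_position M DA DB K q k V va vb \<longleftrightarrow> finite V \<and>
     (\<forall>y \<in> V. matched M DA DB K (2 ^ k - 1) (va y) (vb y)) \<and>
     (\<forall>y \<in> V. \<forall>y' \<in> V. same_nearness M DA DB (2 ^ k) (va y) (vb y) (va y') (vb y')) \<and>
     card (fst ` va ` V) + k \<le> Suc q \<and> card (fst ` vb ` V) + k \<le> Suc q"

definition spare_copies :: "(nat \<Rightarrow> 'w set) \<Rightarrow> (nat \<Rightarrow> 'w set) \<Rightarrow> nat \<Rightarrow> nat \<Rightarrow> bool" where
  "spare_copies DA DB K q \<longleftrightarrow> (\<forall>c < K. q < card {e. e < K \<and> DB e = DA c})"

lemma spare_copy_exists:
  assumes "spare_copies DA DB K q" and "c < K" and "finite U" and "card U \<le> q"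
  obtains e where "e < K" and "DB e = DA c" and "e \<notin> U"
proof -
  let ?S = "{e. e < K \<and> DB e = DA c}"
  have "\<not> ?S \<subseteq> U"
  proof
    assume "?S \<subseteq> U"
    then have "card ?S \<le> card U" using assms(3) by (rule card_mono[rotated])
    moreover have "q < card ?S" using assms(1,2) unfolding spare_copies_def by simp
    ultimately show False using assms(4) by simp
  qed
  then show ?thesis using that by blast
qed

lemma ef_position_swap: "ef_position M DA DB K q k V va vb \<Longrightarrow> ef_position M DB DA K q k V vb va"
  unfolding ef_position_def by (auto intro: matched_swap same_nearness_swap)

lemma ef_position_subset:
  assumes I: "ef_position M DA DB K q k V va vb" and "V' \<subseteq> V"
  shows "ef_position M DA DB K q k V' va vb"
proof -
  have "finite V" and cards: "card (fst ` va ` V) + k \<le> Suc q" "card (fst ` vb ` V) + k \<le> Suc q"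
    using I unfolding ef_position_def by simp_all
  then have "card (fst ` va ` V') \<le> card (fst ` va ` V)" "card (fst ` vb ` V') \<le> card (fst ` vb ` V)"
    using assms(2) by (simp_all add: card_mono image_mono)
  with cards have "card (fst ` va ` V') + k \<le> Suc q" "card (fst ` vb ` V') + k \<le> Suc q"
    by simp_all
  moreover have "finite V'" using \<open>finite V\<close> assms(2) by (rule rev_finite_subset)
  ultimately show ?thesis using I assms(2) unfolding ef_position_def by blast
qed

lemma ef_position_update:
  assumes I: "ef_position M DA DB K q (Suc k) V va vb" and "z \<notin> V"
    and ab: "matched M DA DB K (2 ^ k - 1) a b"
    and near: "\<And>y. y \<in> V \<Longrightarrow> same_nearness M DA DB (2 ^ k) a b (va y) (vb y)"
    and "card (insert (fst a) (fst ` va ` V)) + k \<le> Suc q"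
    and "card (insert (fst b) (fst ` vb ` V)) + k \<le> Suc q"
  shows "ef_position M DA DB K q k (insert z V) (va(z := a)) (vb(z := b))"
proof -
  have "(2::nat) ^ k - 1 \<le> 2 ^ Suc k - 1" "(2::nat) ^ k \<le> 2 ^ Suc k" by simp_all
  then have old: "\<forall>y \<in> V. matched M DA DB K (2 ^ k - 1) (va y) (vb y)"
      "\<forall>y \<in> V. \<forall>y' \<in> V. same_nearness M DA DB (2 ^ k) (va y) (vb y) (va y') (vb y')"
    using I unfolding ef_position_def by (blast intro: matched_mono same_nearness_mono)+
  have "fst ` (va(z := a)) ` insert z V = insert (fst a) (fst ` va ` V)"
    "fst ` (vb(z := b)) ` insert z V = insert (fst b) (fst ` vb ` V)"
    using \<open>z \<notin> V\<close> by auto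
  then show ?thesis
    using I assms(2,5,6) ab near old unfolding ef_position_def
    by (auto intro: same_nearness_sym same_nearness_refl)
qed

lemma ef_extend_near:
  assumes I: "ef_position M DA DB K q (Suc k) V va vb" and "z \<notin> V" and "y \<in> V"
    and near: "copy_near M DA (2 ^ k) (va y) a"
  shows "\<exists>b \<in> worlds (copies M DB K). ef_position M DA DB K q k (insert z V) (va(z := a)) (vb(z := b))"
proof -
  define P :: nat where "P = 2 ^ k"
  have "1 \<le> P" and P2: "2 ^ Suc k = 2 * P" by (simp_all add: P_def)
  define b where "b = (fst (vb y), snd a)"
  have my: "matched M DA DB K (2 * P - 1) (va y) (vb y)"
    using I \<open>y \<in> V\<close> P2 unfolding ef_position_def by auto
  have near': "copy_near M DA P (va y) a" using near P_def by simp
  have mab: "matched M DA DB K (P - 1) a b"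
    using matched_near[OF my near' \<open>1 \<le> P\<close>] b_def by simp
  have "same_nearness M DA DB P a b (va y') (vb y')" if "y' \<in> V" for y'
  proof -
    have "same_nearness M DA DB (2 * P) (va y) (vb y) (va y') (vb y')"
      "matched M DA DB K (2 * P - 1) (va y') (vb y')"
      using I \<open>y \<in> V\<close> that P2 unfolding ef_position_def by auto
    then show ?thesis using same_nearness_near[OF my near' \<open>1 \<le> P\<close>] b_def by simp
  qed
  moreover have "insert (fst a) (fst ` va ` V) = fst ` va ` V"
    "insert (fst b) (fst ` vb ` V) = fst ` vb ` V"
    using near \<open>y \<in> V\<close> unfolding copy_near_def b_def by auto
  ultimately have "ef_position M DA DB K q k (insert z V) (va(z := a)) (vb(z := b))"
    using ef_position_update[OF I \<open>z \<notin> V\<close>] mab I unfolding P_def ef_position_def by simp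
  moreover have "b \<in> worlds (copies M DB K)" using mab unfolding matched_def by simp
  ultimately show ?thesis by blast
qed

lemma ef_extend_far:
  assumes I: "ef_position M DA DB K q (Suc k) V va vb" and "z \<notin> V"
    and a: "a \<in> worlds (copies M DA K)" and far: "\<forall>y \<in> V. \<not> copy_near M DA (2 ^ k) (va y) a"
    and spare: "spare_copies DA DB K q"
  shows "\<exists>b \<in> worlds (copies M DB K). ef_position M DA DB K q k (insert z V) (va(z := a)) (vb(z := b))"
proof -
  let ?U = "fst ` vb ` V"
  have "finite V" and cards: "card (fst ` va ` V) + Suc k \<le> Suc q" "card ?U + Suc k \<le> Suc q"
    using I unfolding ef_position_def by simp_all
  then obtain e where e: "e < K" "DB e = DA (fst a)" "e \<notin> ?U"
    using spare_copy_exists[OF spare, of "fst a" ?U] a unfolding worlds_copies by auto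
  define b where "b = (e, snd a)"
  have "snd a \<in> DA (fst a)" using a unfolding worlds_copies by simp
  then have "nbhd (restrict M (DA (fst a))) (2 ^ k - 1) (snd a) \<subseteq> DA (fst a)"
    by (rule nbhd_restrict_subset)
  then have mab: "matched M DA DB K (2 ^ k - 1) a b"
    using a e \<open>snd a \<in> DA (fst a)\<close> unfolding matched_def worlds_copies b_def by simp
  have "same_nearness M DA DB (2 ^ k) a b (va y) (vb y)" if "y \<in> V" for y
    unfolding same_nearness_def
  proof (intro allI impI)
    fix m :: nat assume "m \<le> 2 ^ k"
    have "\<not> copy_near M DA m a (va y)"
    proof
      assume "copy_near M DA m a (va y)"
      then have "copy_near M DA (2 ^ k) (va y) a"
        by (meson copy_near_sym copy_near_mono \<open>m \<le> 2 ^ k\<close>)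
      with far that show False by blast
    qed
    moreover have "\<not> copy_near M DB m b (vb y)"
      using e(3) that unfolding copy_near_def b_def by force
    ultimately show "copy_near M DA m a (va y) \<longleftrightarrow> copy_near M DB m b (vb y)" by simp
  qed
  moreover have "card (insert (fst a) (fst ` va ` V)) \<le> Suc (card (fst ` va ` V))"
    "card (insert (fst b) ?U) \<le> Suc (card ?U)"
    using \<open>finite V\<close> by (simp_all add: card_insert_if)
  with cards have "card (insert (fst a) (fst ` va ` V)) + k \<le> Suc q"
    "card (insert (fst b) ?U) + k \<le> Suc q"
    by simp_all
  ultimately have "ef_position M DA DB K q k (insert z V) (va(z := a)) (vb(z := b))"
    using ef_position_update[OF I \<open>z \<notin> V\<close> mab] by blast
  moreover have "b \<in> worlds (copies M DB K)" using mab unfolding matched_def by simp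
  ultimately show ?thesis by blast
qed

lemma ef_extend:
  assumes "ef_position M DA DB K q (Suc k) V va vb" and "z \<notin> V"
    and "a \<in> worlds (copies M DA K)" and "spare_copies DA DB K q"
  shows "\<exists>b \<in> worlds (copies M DB K). ef_position M DA DB K q k (insert z V) (va(z := a)) (vb(z := b))"
  using assms ef_extend_near ef_extend_far by metis

lemma ef_position_quantifier_step:
  assumes I: "ef_position M DA DB K q (Suc k) V va vb"
    and spare: "spare_copies DA DB K q" "spare_copies DB DA K q"
    and step: "\<And>a b. ef_position M DA DB K q k (insert z V) (va(z := a)) (vb(z := b)) \<Longrightarrow>
      P a \<longleftrightarrow> Q b"
  shows "(\<exists>a \<in> worlds (copies M DA K). P a) \<longleftrightarrow> (\<exists>b \<in> worlds (copies M DB K). Q b)"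
    and "(\<forall>a \<in> worlds (copies M DA K). P a) \<longleftrightarrow> (\<forall>b \<in> worlds (copies M DB K). Q b)"
proof -
  have I0: "ef_position M DA DB K q (Suc k) (V - {z}) va vb"
    using I by (rule ef_position_subset) blast
  have z: "z \<notin> V - {z}" by simp
  have forth: "\<exists>b \<in> worlds (copies M DB K). P a \<longleftrightarrow> Q b" if a: "a \<in> worlds (copies M DA K)" for a
  proof -
    obtain b where "b \<in> worlds (copies M DB K)"
      "ef_position M DA DB K q k (insert z V) (va(z := a)) (vb(z := b))"
      using ef_extend[OF I0 z a spare(1)] by auto
    then show ?thesis using step by blast
  qed
  have backward: "\<exists>a \<in> worlds (copies M DA K). P a \<longleftrightarrow> Q b" if b: "b \<in> worlds (copies M DB K)" for b
  proof -
    obtain a where "a \<in> worlds (copies M DA K)"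
      "ef_position M DB DA K q k (insert z V) (vb(z := b)) (va(z := a))"
      using ef_extend[OF ef_position_swap[OF I0] z b spare(2)] by auto
    then show ?thesis using step ef_position_swap by blast
  qed
  show "(\<exists>a \<in> worlds (copies M DA K). P a) \<longleftrightarrow> (\<exists>b \<in> worlds (copies M DB K). Q b)"
    using forth backward by blast
  show "(\<forall>a \<in> worlds (copies M DA K). P a) \<longleftrightarrow> (\<forall>b \<in> worlds (copies M DB K). Q b)"
    using forth backward by blast
qed

lemma ef_position_sat_iff:
  assumes spare: "spare_copies DA DB K q" "spare_copies DB DA K q"
    and "fv f \<subseteq> V" and "qr f \<le> k" and "ef_position M DA DB K q k V va vb"
  shows "sat (copies M DA K) va f \<longleftrightarrow> sat (copies M DB K) vb f"
  using assms(3-)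
proof (induction f arbitrary: k V va vb)
  case (FEq x y)
  then have "same_nearness M DA DB (2 ^ k) (va x) (vb x) (va y) (vb y)"
    unfolding ef_position_def by simp
  then show ?case unfolding same_nearness_def by (metis copy_near_zero sat.simps(1) zero_le)
next
  case (FRel i x y)
  then have mx: "matched M DA DB K (2 ^ k - 1) (va x) (vb x)"
    and my: "matched M DA DB K (2 ^ k - 1) (va y) (vb y)"
    and "same_nearness M DA DB (2 ^ k) (va x) (vb x) (va y) (vb y)"
    unfolding ef_position_def by simp_all
  then have "copy_near M DA 1 (va x) (va y) \<longleftrightarrow> copy_near M DB 1 (vb x) (vb y)"
    unfolding same_nearness_def by simp
  then show ?case using rel_copies_matched[OF mx my] by simp
next
  case (FPred j x)
  then have "matched M DA DB K (2 ^ k - 1) (va x) (vb x)"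
    unfolding ef_position_def by simp
  then show ?case unfolding matched_def worlds_copies by (auto simp: val_copies)
next
  case (FEx z g)
  then obtain k' where k: "k = Suc k'" and "qr g \<le> k'" by (cases k) auto
  moreover have "fv g \<subseteq> insert z V" using FEx.prems(1) by auto
  ultimately show ?case
    using ef_position_quantifier_step(1)[OF FEx.prems(3)[unfolded k] spare, of z
        "\<lambda>a. sat (copies M DA K) (va(z := a)) g" "\<lambda>b. sat (copies M DB K) (vb(z := b)) g"]
      FEx.IH[of "insert z V" k'] by simp
next
  case (FAll z g)
  then obtain k' where k: "k = Suc k'" and "qr g \<le> k'" by (cases k) auto
  moreover have "fv g \<subseteq> insert z V" using FAll.prems(1) by auto
  ultimately show ?case
    using ef_position_quantifier_step(2)[OF FAll.prems(3)[unfolded k] spare, of z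
        "\<lambda>a. sat (copies M DA K) (va(z := a)) g" "\<lambda>b. sat (copies M DB K) (vb(z := b)) g"]
      FAll.IH[of "insert z V" k'] by simp
qed auto

section \<open>Renaming worlds and generated substructures\<close>

definition kripke_image :: "('a \<Rightarrow> 'b) \<Rightarrow> ('a, 'i, 'j) kripke \<Rightarrow> ('b, 'i, 'j) kripke" where
  "kripke_image f S =
     \<lparr> worlds = f ` worlds S, rel = (\<lambda>i. map_prod f f ` rel S i), val = (\<lambda>j. f ` val S j) \<rparr>"

lemma kripke_image_simps [simp]:
  "worlds (kripke_image f S) = f ` worlds S"
  "rel (kripke_image f S) i = map_prod f f ` rel S i"
  "val (kripke_image f S) j = f ` val S j"
  unfolding kripke_image_def by simp_all

lemma wf_kripke_image: "wf_kripke S \<Longrightarrow> wf_kripke (kripke_image f S)"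
  unfolding wf_kripke_def by (auto simp: map_prod_def) blast+

lemma rel_kripke_image_Image: "inj f \<Longrightarrow> rel (kripke_image f S) i `` {f u} = f ` (rel S i `` {u})"
  by (auto simp: inj_eq)

lemma sat_kripke_image: "inj f \<Longrightarrow> sat (kripke_image f S) (f \<circ> v) \<phi> \<longleftrightarrow> sat S v \<phi>"
  by (induction \<phi> arbitrary: v) (auto simp: inj_eq inj_image_mem_iff fun_upd_comp[symmetric])

lemma holds_at_kripke_image: "inj f \<Longrightarrow> holds_at (kripke_image f S) (f w) \<phi> \<longleftrightarrow> holds_at S w \<phi>"
  unfolding holds_at_def using sat_kripke_image[of f S "\<lambda>_. w"] by (simp add: comp_def)

lemma gbisimilar_generated_substructure:
  assumes "wf_kripke S" and "w \<in> worlds S" and "worlds S \<subseteq> worlds T"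
    and val: "\<And>u j. u \<in> worlds S \<Longrightarrow> u \<in> val S j \<longleftrightarrow> u \<in> val T j"
    and rel: "\<And>u i. u \<in> worlds S \<Longrightarrow> rel S i `` {u} = rel T i `` {u}"
  shows "gbisimilar S w T w"
proof -
  have succ: "rel S i `` {u} \<subseteq> worlds S" for i u
    using assms(1) unfolding wf_kripke_def by blast
  have forth: "\<exists>vs'. distinct vs' \<and> set vs' \<subseteq> rel T i `` {u} \<and>
      list_all2 (\<lambda>a b. (a, b) \<in> Id_on (worlds S)) vs vs'"
    if "u \<in> worlds S" "distinct vs" "set vs \<subseteq> rel S i `` {u}" for u i vs
    using that rel succ[of i u] by (intro exI[of _ vs]) (auto simp: list_all2_same)
  have backward: "\<exists>vs. distinct vs \<and> set vs \<subseteq> rel S i `` {u} \<and>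
      list_all2 (\<lambda>a b. (a, b) \<in> Id_on (worlds S)) vs vs'"
    if "u \<in> worlds S" "distinct vs'" "set vs' \<subseteq> rel T i `` {u}" for u i vs'
    using that rel succ[of i u] by (intro exI[of _ vs']) (auto simp: list_all2_same)
  have "graded_bisim S T (Id_on (worlds S))"
    unfolding graded_bisim_def using assms(2,3) val forth backward by fastforce
  then show ?thesis unfolding gbisimilar_def using assms(2) by blast
qed

text \<open>The copy index is recorded in the length of a list, so that the disjoint unions live on worlds
  of type 'w list, the type the invariance hypothesis speaks about.\<close>
definition encode_copy :: "nat \<times> 'w \<Rightarrow> 'w list" where
  "encode_copy a = replicate (Suc (fst a)) (snd a)"

lemma inj_encode_copy: "inj encode_copy"
proof (rule injI)
  fix a a' :: "nat \<times> 'w" assume eq: "encode_copy a = encode_copy a'"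
  then have "length (encode_copy a) = length (encode_copy a')" "hd (encode_copy a) = hd (encode_copy a')"
    by simp_all
  then show "a = a'" unfolding encode_copy_def by (simp add: prod_eq_iff)
qed

lemma gbisimilar_copy:
  assumes "wf_kripke M" and "c < K" and "u \<in> D c" and "D c \<subseteq> worlds M"
  shows "gbisimilar (kripke_image (\<lambda>v. encode_copy (c, v)) (restrict M (D c))) (encode_copy (c, u))
    (kripke_image encode_copy (copies M D K)) (encode_copy (c, u))"
proof -
  let ?f = "\<lambda>v. encode_copy (c, v)"
  have inj: "inj ?f" using inj_encode_copy by (auto intro: injI dest: injD)
  have worlds_restrict: "worlds (restrict M (D c)) = D c"
    using assms(4) unfolding restrict_def by auto
  have rel_M: "(v, v') \<in> rel M i \<Longrightarrow> v \<in> worlds M \<and> v' \<in> worlds M" for v v' i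
    using assms(1) unfolding wf_kripke_def by blast
  show ?thesis
  proof (rule gbisimilar_generated_substructure)
    show "wf_kripke (kripke_image ?f (restrict M (D c)))"
      using assms(1-3) worlds_restrict
      by (intro wf_kripke_image) (auto simp: wf_kripke_def restrict_def)
    show "encode_copy (c, u) \<in> worlds (kripke_image ?f (restrict M (D c)))"
      using assms(3) worlds_restrict by simp
    show "worlds (kripke_image ?f (restrict M (D c))) \<subseteq> worlds (kripke_image encode_copy (copies M D K))"
      using assms(2) worlds_restrict by (auto simp: worlds_copies)
  next
    fix x j assume "x \<in> worlds (kripke_image ?f (restrict M (D c)))"
    then obtain v where v: "x = ?f v" "v \<in> D c" using worlds_restrict by auto
    show "x \<in> val (kripke_image ?f (restrict M (D c))) j \<longleftrightarrow>
        x \<in> val (kripke_image encode_copy (copies M D K)) j"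
      unfolding v(1) kripke_image_simps inj_image_mem_iff[OF inj] inj_image_mem_iff[OF inj_encode_copy]
      using v(2) assms(2) by (simp add: val_copies restrict_def)
  next
    fix x i assume "x \<in> worlds (kripke_image ?f (restrict M (D c)))"
    then obtain v where v: "x = ?f v" "v \<in> D c" using worlds_restrict by auto
    have "rel (copies M D K) i `` {(c, v)} = Pair c ` (rel (restrict M (D c)) i `` {v})"
      using v(2) assms(2) by (auto simp: rel_copies restrict_def image_iff)
    then have "rel (kripke_image encode_copy (copies M D K)) i `` {encode_copy (c, v)} =
        ?f ` (rel (restrict M (D c)) i `` {v})"
      unfolding rel_kripke_image_Image[OF inj_encode_copy] by (simp add: image_image)
    then show "rel (kripke_image ?f (restrict M (D c))) i `` {x} =
        rel (kripke_image encode_copy (copies M D K)) i `` {x}"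
      unfolding v(1) rel_kripke_image_Image[OF inj] by simp
  qed
qed

lemma holds_at_copy_iff:
  assumes inv: "gbisim_invariant C \<phi>" and "wf_kripke M" and "c < K" and "u \<in> D c" and "D c \<subseteq> worlds M"
    and "C (kripke_image (\<lambda>v. encode_copy (c, v)) (restrict M (D c)))"
    and "C (kripke_image encode_copy (copies M D K))"
  shows "holds_at (restrict M (D c)) u \<phi> \<longleftrightarrow> holds_at (copies M D K) (c, u) \<phi>"
proof -
  let ?f = "\<lambda>v. encode_copy (c, v)"
  have inj: "inj ?f" using inj_encode_copy by (auto intro: injI dest: injD)
  have "wf_kripke (restrict M (D c))" "u \<in> worlds (restrict M (D c))"
    using assms(2,4,5) unfolding wf_kripke_def restrict_def by auto
  moreover have cu: "(c, u) \<in> worlds (copies M D K)"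
    using assms(3,4) by (simp add: worlds_copies)
  moreover have "wf_kripke (copies M D K)"
    unfolding wf_kripke_def
  proof (intro conjI)
    show "worlds (copies M D K) \<noteq> {}" using cu by blast
  qed (auto simp: worlds_copies rel_copies val_copies)
  ultimately have "wf_kripke (kripke_image ?f (restrict M (D c)))"
      "wf_kripke (kripke_image encode_copy (copies M D K))"
      "?f u \<in> worlds (kripke_image ?f (restrict M (D c)))"
      "encode_copy (c, u) \<in> worlds (kripke_image encode_copy (copies M D K))"
    by (simp_all add: wf_kripke_image)
  then have "holds_at (kripke_image ?f (restrict M (D c))) (?f u) \<phi> \<longleftrightarrow>
      holds_at (kripke_image encode_copy (copies M D K)) (encode_copy (c, u)) \<phi>"
    using inv gbisimilar_copy[where D = D, OF assms(2-5)] assms(6,7)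
    unfolding gbisim_invariant_def by blast
  then show ?thesis
    unfolding holds_at_kripke_image[OF inj] holds_at_kripke_image[OF inj_encode_copy] .
qed

lemma restrict_inter_worlds: "wf_kripke M \<Longrightarrow> restrict M (worlds M \<inter> S) = restrict M S"
  unfolding wf_kripke_def restrict_def by (auto simp: fun_eq_iff)

lemma restrict_worlds: "wf_kripke M \<Longrightarrow> restrict M (worlds M) = M"
  unfolding wf_kripke_def restrict_def by (cases M) (auto simp: fun_eq_iff)

lemma spare_copies_two_kinds:
  assumes "\<And>c. c < 2 * q + 3 \<Longrightarrow> D1 c = X \<or> D1 c = Y"
    and "\<And>e. 1 \<le> e \<Longrightarrow> e \<le> Suc q \<Longrightarrow> D2 e = X"
    and "\<And>e. Suc q < e \<Longrightarrow> e < 2 * q + 3 \<Longrightarrow> D2 e = Y"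
  shows "spare_copies D1 D2 (2 * q + 3) q"
  unfolding spare_copies_def
proof (intro allI impI)
  fix c assume "c < 2 * q + 3"
  let ?E = "{e. e < 2 * q + 3 \<and> D2 e = D1 c}"
  have "finite ?E" by simp
  have "{1..Suc q} \<subseteq> ?E \<or> {Suc (Suc q)..<2 * q + 3} \<subseteq> ?E"
    using assms(1)[OF \<open>c < 2 * q + 3\<close>] assms(2,3) by auto
  then show "q < card ?E"
  proof
    assume "{1..Suc q} \<subseteq> ?E"
    then have "card {1..Suc q} \<le> card ?E" by (rule card_mono[OF \<open>finite ?E\<close>])
    then show ?thesis by simp
  next
    assume "{Suc (Suc q)..<2 * q + 3} \<subseteq> ?E"
    then have "card {Suc (Suc q)..<2 * q + 3} \<le> card ?E" by (rule card_mono[OF \<open>finite ?E\<close>])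
    then show ?thesis by simp
  qed
qed

lemma ef_position_initial:
  assumes "finite V" and "matched M DA DB K (2 ^ q - 1) a b"
  shows "ef_position M DA DB K q q V (\<lambda>_. a) (\<lambda>_. b)"
proof -
  have "card (fst ` (\<lambda>_. x) ` V) \<le> 1" for x :: "nat \<times> 'w"
    using card_mono[of "{fst x}" "fst ` (\<lambda>_. x) ` V"] by fastforce
  from this[of a] this[of b] show ?thesis
    using assms unfolding ef_position_def by (simp add: same_nearness_refl)
qed

lemma finite_fv: "finite (fv f)"
  by (induction f) auto

lemma finite_worlds_copies:
  assumes "finite (worlds M)" and "\<And>c. D c \<subseteq> worlds M"
  shows "finite (worlds (copies M D K))"
proof -
  have "worlds (copies M D K) \<subseteq> {..<K} \<times> worlds M"
    using assms(2) by (force simp: worlds_copies)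
  then show ?thesis using assms(1) by (simp add: finite_subset)
qed

lemma holds_at_iff_restrict_nbhd:
  fixes \<phi> :: "('i, 'j) fo" and M :: "('w, 'i, 'j) kripke" and C :: "('w list, 'i, 'j) kripke \<Rightarrow> bool"
  assumes inv: "gbisim_invariant C \<phi>" and wf: "wf_kripke M" and w: "w \<in> worlds M" and "qr \<phi> \<le> q"
    and C: "\<And>N. (finite (worlds M) \<Longrightarrow> finite (worlds N)) \<Longrightarrow> C N"
  shows "holds_at M w \<phi> \<longleftrightarrow> holds_at (restrict M (nbhd M (2 ^ q - 1) w)) w \<phi>"
proof -
  define W where "W = worlds M"
  define Nw where "Nw = W \<inter> nbhd M (2 ^ q - 1) w"
  define K where "K = 2 * q + 3"
  define DA where "DA c = (if c \<le> Suc q then W else Nw)" for c :: nat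
  define DB where "DB c = (if c = 0 then Nw else DA c)" for c :: nat
  have "w \<in> W" "w \<in> Nw" using w by (simp_all add: Nw_def W_def)
  have sub: "DA c \<subseteq> worlds M" "DB c \<subseteq> worlds M" for c
    by (auto simp: DA_def DB_def Nw_def W_def)
  have spare: "spare_copies DA DB K q" "spare_copies DB DA K q"
    unfolding K_def by (rule spare_copies_two_kinds[where X = W and Y = Nw]; simp add: DA_def DB_def)+
  have "nbhd (restrict M W) (2 ^ q - 1) w \<subseteq> Nw"
    using nbhd_restrict_subset[OF \<open>w \<in> W\<close>] nbhd_restrict_le[of M W "2 ^ q - 1" w]
    unfolding Nw_def by blast
  moreover have "nbhd (restrict M Nw) (2 ^ q - 1) w \<subseteq> W"
    using nbhd_restrict_subset[OF \<open>w \<in> Nw\<close>, of M "2 ^ q - 1"] unfolding Nw_def by blast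
  ultimately have "matched M DA DB K (2 ^ q - 1) (0, w) (0, w)"
    using \<open>w \<in> W\<close> \<open>w \<in> Nw\<close> unfolding matched_def worlds_copies DA_def DB_def K_def by simp
  then have ef: "holds_at (copies M DA K) (0, w) \<phi> \<longleftrightarrow> holds_at (copies M DB K) (0, w) \<phi>"
    unfolding holds_at_def
    by (rule ef_position_sat_iff[OF spare order_refl \<open>qr \<phi> \<le> q\<close> ef_position_initial[OF finite_fv]])
  have C_copies: "C (kripke_image encode_copy (copies M D K))" if "\<And>c. D c \<subseteq> worlds M" for D
    by (rule C) (simp add: finite_worlds_copies that)
  have C_restrict: "C (kripke_image f (restrict M S))" for f :: "'w \<Rightarrow> 'w list" and S
    by (rule C) (simp add: restrict_def)
  have "0 < K" by (simp add: K_def)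
  have "holds_at M w \<phi> \<longleftrightarrow> holds_at (restrict M (DA 0)) w \<phi>"
    by (simp add: DA_def W_def restrict_worlds wf)
  also have "\<dots> \<longleftrightarrow> holds_at (copies M DA K) (0, w) \<phi>"
    using \<open>w \<in> W\<close>
    by (intro holds_at_copy_iff[where D = DA and c = 0, OF inv wf \<open>0 < K\<close> _ sub(1)
          C_restrict C_copies[OF sub(1)]])
      (simp add: DA_def)
  also note ef
  also have "holds_at (copies M DB K) (0, w) \<phi> \<longleftrightarrow> holds_at (restrict M (DB 0)) w \<phi>"
    using \<open>w \<in> Nw\<close>
    by (intro holds_at_copy_iff[where D = DB and c = 0, OF inv wf \<open>0 < K\<close> _ sub(2)
          C_restrict C_copies[OF sub(2)], symmetric])
      (simp add: DB_def)
  also have "restrict M (DB 0) = restrict M (nbhd M (2 ^ q - 1) w)"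
    by (simp add: DB_def Nw_def W_def restrict_inter_worlds wf)
  finally show ?thesis .
qed

theorem mainTheorem7:
  fixes phi :: "('i::finite, 'j::finite) fo" and x :: nat and q :: nat
  assumes "fv phi \<subseteq> {x}" and "qr phi \<le> q"
  shows "(gbisim_invariant (\<lambda>N :: ('w list, 'i, 'j) kripke. True) phi \<longrightarrow>
            (\<forall>(M :: ('w, 'i, 'j) kripke) w.
               wf_kripke M \<and> w \<in> worlds M \<and>
               rooted_tree_like (restrict M (nbhd M (2 ^ q - 1) w)) w \<longrightarrow>
               (holds_at M w phi \<longleftrightarrow> holds_at (restrict M (nbhd M (2 ^ q - 1) w)) w phi)))
       \<and> (gbisim_invariant (\<lambda>N :: ('w list, 'i, 'j) kripke. finite (worlds N)) phi \<longrightarrow>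
            (\<forall>(M :: ('w, 'i, 'j) kripke) w.
               wf_kripke M \<and> finite (worlds M) \<and> w \<in> worlds M \<and>
               rooted_tree_like (restrict M (nbhd M (2 ^ q - 1) w)) w \<longrightarrow>
               (holds_at M w phi \<longleftrightarrow> holds_at (restrict M (nbhd M (2 ^ q - 1) w)) w phi)))"
proof (intro conjI impI allI; elim conjE)
  fix M :: "('w, 'i, 'j) kripke" and w
  assume "gbisim_invariant (\<lambda>N :: ('w list, 'i, 'j) kripke. True) phi" "wf_kripke M" "w \<in> worlds M"
  then show "holds_at M w phi \<longleftrightarrow> holds_at (restrict M (nbhd M (2 ^ q - 1) w)) w phi"
    using assms(2) by (rule holds_at_iff_restrict_nbhd) simp
next
  fix M :: "('w, 'i, 'j) kripke" and w
  assume inv: "gbisim_invariant (\<lambda>N :: ('w list, 'i, 'j) kripke. finite (worlds N)) phi"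
    and "wf_kripke M" "finite (worlds M)" "w \<in> worlds M"
  then show "holds_at M w phi \<longleftrightarrow> holds_at (restrict M (nbhd M (2 ^ q - 1) w)) w phi"
    using holds_at_iff_restrict_nbhd[OF inv _ _ assms(2)] by blast
qed

end
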